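(* Let $X$ be a connected open Riemann surface and let $E\subseteq X$ be a semi-admissible set. Then $E$ satisfies condition $\mathcal{G}$: for every compact set $K\subseteq X$ there exists a compact set $Q$ with $K\subseteq Q\subseteq X$ such that no connected component of the interior $\mathring{E}$ of $E$ intersects both $K$ and $X\setminus Q$.
   Context: A closed set $E \subseteq X$ is called semi-admissible if there exist a locally finite, pairwise disjoint family of compact sets $\{H_\lambda\}_{\lambda\in\Lambda}$ in $X$ and a closed set $S\subseteq X$ with empty interior such that $E = S \cup \bigcup_{\lambda\in\Lambda} H_\lambda$. *)

theory Defs
  imports "HOL-Analysis.Analysis"
begin

definition riemann_surface :: "'a topology \<Rightarrow> ('a set \<times> ('a \<Rightarrow> complex)) set \<Rightarrow> bool" where
  "riemann_surface X A \<longleftrightarrow>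
     Hausdorff_space X \<and>
     (\<forall>(U, \<phi>) \<in> A. openin X U \<and> open (\<phi> ` U) \<and>
        homeomorphic_map (subtopology X U) (top_of_set (\<phi> ` U)) \<phi>) \<and>
     \<Union>(fst ` A) = topspace X \<and>
     (\<forall>(U, \<phi>) \<in> A. \<forall>(V, \<psi>) \<in> A. (\<psi> \<circ> inv_into U \<phi>) holomorphic_on (\<phi> ` (U \<inter> V)))"

text \<open>Connected open (= non-compact) Riemann surface.\<close>
definition connected_open_riemann_surface :: "'a topology \<Rightarrow> ('a set \<times> ('a \<Rightarrow> complex)) set \<Rightarrow> bool" where
  "connected_open_riemann_surface X A \<longleftrightarrow>
     riemann_surface X A \<and> connected_space X \<and> \<not> compact_space X"

definition locally_finite_family :: "'a topology \<Rightarrow> 'a set set \<Rightarrow> bool" where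
  "locally_finite_family X \<H> \<longleftrightarrow>
     (\<forall>x \<in> topspace X. \<exists>V. openin X V \<and> x \<in> V \<and> finite {H \<in> \<H>. H \<inter> V \<noteq> {}})"

definition semi_admissible :: "'a topology \<Rightarrow> 'a set \<Rightarrow> bool" where
  "semi_admissible X E \<longleftrightarrow> closedin X E \<and>
     (\<exists>\<H> S. locally_finite_family X \<H> \<and> pairwise disjnt \<H> \<and> (\<forall>H \<in> \<H>. compactin X H) \<and>
        closedin X S \<and> X interior_of S = {} \<and> E = S \<union> \<Union>\<H>)"

definition condition_G :: "'a topology \<Rightarrow> 'a set \<Rightarrow> bool" where
  "condition_G X E \<longleftrightarrow>
     (\<forall>K. compactin X K \<longrightarrow>
        (\<exists>Q. compactin X Q \<and> K \<subseteq> Q \<and> Q \<subseteq> topspace X \<and>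
           \<not> (\<exists>C \<in> connected_components_of (subtopology X (X interior_of E)).
                 C \<inter> K \<noteq> {} \<and> C \<inter> (topspace X - Q) \<noteq> {})))"

end

theory Submission
  imports Defs
begin

text \<open>Since the members of \<open>\<H>\<close> are compact in a Hausdorff space and the family is locally
  finite, \<open>\<Union>\<H>\<close> is closed; hence the interior of \<open>E\<close> minus \<open>\<Union>\<H>\<close> is an open subset of \<open>S\<close>
  and therefore empty. A component of the interior of \<open>E\<close> is thus a connected subset of a
  disjoint, locally finite union of closed sets, so it lies in a single \<open>H \<in> \<H>\<close>. A compact \<open>K\<close>
  meets only finitely many members of \<open>\<H>\<close>, and \<open>Q\<close> is \<open>K\<close> together with those members.\<close>

lemma locally_finite_in_iff_locally_finite_family:
  "locally_finite_in X \<H> \<longleftrightarrow> locally_finite_family X \<H> \<and> \<Union>\<H> \<subseteq> topspace X"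
  by (auto simp: locally_finite_in_def locally_finite_family_def)

lemma locally_finite_in_finite_meets_compactin:
  assumes "locally_finite_in X \<H>" "compactin X K"
  shows "finite {H \<in> \<H>. H \<inter> K \<noteq> {}}"
proof -
  let ?\<V> = "{V. openin X V \<and> finite {H \<in> \<H>. H \<inter> V \<noteq> {}}}"
  have "K \<subseteq> \<Union>?\<V>"
    using assms compactin_subset_topspace unfolding locally_finite_in_def by blast
  then obtain \<F> where \<F>: "finite \<F>" "\<F> \<subseteq> ?\<V>" "K \<subseteq> \<Union>\<F>"
    using assms(2) unfolding compactin_def by (metis (no_types, lifting) mem_Collect_eq)
  have "{H \<in> \<H>. H \<inter> K \<noteq> {}} \<subseteq> (\<Union>V\<in>\<F>. {H \<in> \<H>. H \<inter> V \<noteq> {}})"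
    using \<F>(3) by blast
  moreover have "finite (\<Union>V\<in>\<F>. {H \<in> \<H>. H \<inter> V \<noteq> {}})"
    using \<F>(1,2) by auto
  ultimately show ?thesis
    using finite_subset by blast
qed

lemma connectedin_subset_locally_finite_disjoint_Union:
  assumes "locally_finite_in X \<H>" "\<And>H. H \<in> \<H> \<Longrightarrow> closedin X H" "pairwise disjnt \<H>"
    and "connectedin X C" "C \<noteq> {}" "C \<subseteq> \<Union>\<H>"
  obtains H where "H \<in> \<H>" "C \<subseteq> H"
proof -
  obtain x H where H: "H \<in> \<H>" "x \<in> H" "x \<in> C"
    using assms(5,6) by blast
  let ?R = "\<Union>(\<H> - {H})"
  have "closedin X ?R"
    using assms(1,2) locally_finite_in_subset by (blast intro: closedin_locally_finite_Union)
  moreover have "H \<inter> ?R = {}"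
    using assms(3) H(1) unfolding pairwise_def disjnt_def by blast
  moreover have "C \<subseteq> H \<union> ?R"
    using assms(6) by blast
  ultimately have "C \<subseteq> H \<or> C \<inter> ?R = {}"
    using assms(2)[OF H(1)] assms(4) H(2,3) unfolding connectedin_closedin by blast
  then have "C \<subseteq> H"
    using \<open>C \<subseteq> H \<union> ?R\<close> by blast
  with H(1) show thesis ..
qed

lemma interior_of_Un_closedin_subset:
  assumes "X interior_of S = {}" "closedin X T"
  shows "X interior_of (S \<union> T) \<subseteq> T"
proof -
  have "openin X (X interior_of (S \<union> T) - T)"
    using assms(2) by (simp add: openin_diff)
  moreover have "X interior_of (S \<union> T) - T \<subseteq> S"
    using interior_of_subset[of X "S \<union> T"] by blast
  ultimately have "X interior_of (S \<union> T) - T \<subseteq> X interior_of S"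
    by (simp add: interior_of_maximal)
  with assms(1) show ?thesis
    by blast
qed

lemma condition_G_if_components_in_compact_family:
  assumes "locally_finite_in X \<H>" "\<And>H. H \<in> \<H> \<Longrightarrow> compactin X H"
    and "\<And>C. C \<in> connected_components_of (subtopology X (X interior_of E)) \<Longrightarrow> \<exists>H\<in>\<H>. C \<subseteq> H"
  shows "condition_G X E"
  unfolding condition_G_def
proof (intro allI impI)
  fix K
  assume K: "compactin X K"
  define Q where "Q = K \<union> \<Union>{H \<in> \<H>. H \<inter> K \<noteq> {}}"
  have "compactin X Q"
    unfolding Q_def using K assms(2) locally_finite_in_finite_meets_compactin[OF assms(1) K]
    by (intro compactin_Un compactin_Union) auto
  moreover have "C \<subseteq> Q"
    if "C \<in> connected_components_of (subtopology X (X interior_of E))" "C \<inter> K \<noteq> {}" for C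
    using assms(3)[OF that(1)] that(2) unfolding Q_def by blast
  ultimately show "\<exists>Q. compactin X Q \<and> K \<subseteq> Q \<and> Q \<subseteq> topspace X \<and>
           \<not> (\<exists>C \<in> connected_components_of (subtopology X (X interior_of E)).
                 C \<inter> K \<noteq> {} \<and> C \<inter> (topspace X - Q) \<noteq> {})"
    unfolding Q_def by (blast dest: compactin_subset_topspace)
qed

lemma semi_admissible_imp_condition_G:
  assumes "Hausdorff_space X" "semi_admissible X E"
  shows "condition_G X E"
proof -
  obtain \<H> S where lf: "locally_finite_family X \<H>" and disj: "pairwise disjnt \<H>"
    and compact: "\<And>H. H \<in> \<H> \<Longrightarrow> compactin X H" and S: "X interior_of S = {}"
    and E: "E = S \<union> \<Union>\<H>"
    using assms(2) unfolding semi_admissible_def by blast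
  have lfin: "locally_finite_in X \<H>"
    using lf compact compactin_subset_topspace
    by (auto simp: locally_finite_in_iff_locally_finite_family)
  have closed: "\<And>H. H \<in> \<H> \<Longrightarrow> closedin X H"
    using compact compactin_imp_closedin[OF assms(1)] by blast
  have "X interior_of E \<subseteq> \<Union>\<H>"
    unfolding E using S closedin_locally_finite_Union[OF closed lfin]
    by (rule interior_of_Un_closedin_subset)
  have "\<exists>H\<in>\<H>. C \<subseteq> H"
    if "C \<in> connected_components_of (subtopology X (X interior_of E))" for C
  proof -
    have "connectedin X C" "C \<noteq> {}" "C \<subseteq> \<Union>\<H>"
      using connectedin_connected_components_of[OF that] nonempty_connected_components_of[OF that]
        \<open>X interior_of E \<subseteq> \<Union>\<H>\<close> by (auto simp: connectedin_subtopology)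
    then show ?thesis
      by (meson connectedin_subset_locally_finite_disjoint_Union[OF lfin closed disj])
  qed
  then show ?thesis
    using condition_G_if_components_in_compact_family[OF lfin compact] by blast
qed

theorem proposition4p2:
  fixes X :: "'a topology" and A :: "('a set \<times> ('a \<Rightarrow> complex)) set" and E :: "'a set"
  assumes "connected_open_riemann_surface X A"
    and "semi_admissible X E"
  shows "condition_G X E"
proof -
  have "Hausdorff_space X"
    using assms(1) unfolding connected_open_riemann_surface_def riemann_surface_def by blast
  then show ?thesis
    using assms(2) by (rule semi_admissible_imp_condition_G)
qed

end
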